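(* Fix parameters (including $K\in\mathbb N$ and $\beta_{IA}\in(0,1]$) and a population size vector $\mathbf m$ as in the context, with Assumption (A). Then the problem $\min_{\mathbf y\in\mathcal Y}\overline{SC}(\mathbf y)$ has a unique solution $\mathbf y^\star(\mathbf m,K,\beta_{IA})$.
   Context: Let $D_{\max}\in\mathbb N$, $\mathcal D=\{1,\dots,D_{\max}\}$. A population size vector is $\mathbf m=(m_d)_{d\in\mathcal D}$ with $m_d>0$, $\sum_d m_d=1$. Parameters: $\tau_{DA}\in(0,1]$; $0\le L_P<L_U$; $0\le p_P^i<p_U^i\le1$; $\beta_{IA}\in(0,1]$; $K\in\mathbb N$; $c_P,c_I\ge0$; $\xi_{\rm cov}\in(0,1]$, $ded\ge0$. Let $\mathcal Y=\prod_{d\in\mathcal D}[0,m_d]$. For $\mathbf y\in\mathcal Y$ set $g_d=y_d/m_d$, $w_d=d\,m_d/\sum_{d'}d'm_{d'}$, $\gamma(\mathbf y)=\beta_{IA}\sum_d w_d(g_dp_P^i+(1-g_d)p_U^i)$, $\lambda(\mathbf y)=\beta_{IA}\sum_d w_d(d-1)(g_dp_P^i+(1-g_d)p_U^i)$, $e(\mathbf y)=\gamma(\mathbf y)\sum_{k=1}^K\lambda(\mathbf y)^{k-1}$, $C_{d,P}(\mathbf y)=\tau_{DA}(1+d\,e(\mathbf y))L_P+c_P$, $C_{d,N}(\mathbf y)=\tau_{DA}(1+d\,e(\mathbf y))L_U$, and the social cost $\overline{SC}(\mathbf y)=\sum_{d\in\mathcal D}\big(y_dC_{d,P}(\mathbf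 y)+(m_d-y_d)C_{d,N}(\mathbf y)\big)$ (here $y_d$ is the mass of degree-$d$ nodes that protect, the rest take no action). Assumption (A): $L_P<(1-\xi_{\rm cov})L_U$ and $c_P>c_I+ded$. *)

theory Defs
  imports Complex_Main
begin

text \<open>Degree set D = {1..Dmax}. Population vectors and strategy profiles are
functions nat => real; profiles are normalised to 0 outside {1..Dmax}.\<close>

definition feasible_set :: "nat \<Rightarrow> (nat \<Rightarrow> real) \<Rightarrow> (nat \<Rightarrow> real) set" where
  "feasible_set Dmax m =
     {y. (\<forall>d\<in>{1..Dmax}. 0 \<le> y d \<and> y d \<le> m d) \<and> (\<forall>d. d \<notin> {1..Dmax} \<longrightarrow> y d = 0)}"

definition wdeg :: "nat \<Rightarrow> (nat \<Rightarrow> real) \<Rightarrow> nat \<Rightarrow> real" where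
  "wdeg Dmax m d = real d * m d / (\<Sum>d'\<in>{1..Dmax}. real d' * m d')"

definition gam :: "nat \<Rightarrow> (nat \<Rightarrow> real) \<Rightarrow> real \<Rightarrow> real \<Rightarrow> real \<Rightarrow> (nat \<Rightarrow> real) \<Rightarrow> real" where
  "gam Dmax m beta pP pU y =
     beta * (\<Sum>d\<in>{1..Dmax}. wdeg Dmax m d * ((y d / m d) * pP + (1 - y d / m d) * pU))"

definition lam :: "nat \<Rightarrow> (nat \<Rightarrow> real) \<Rightarrow> real \<Rightarrow> real \<Rightarrow> real \<Rightarrow> (nat \<Rightarrow> real) \<Rightarrow> real" where
  "lam Dmax m beta pP pU y =
     beta * (\<Sum>d\<in>{1..Dmax}. wdeg Dmax m d * (real d - 1) *
                 ((y d / m d) * pP + (1 - y d / m d) * pU))"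

definition eexp :: "nat \<Rightarrow> (nat \<Rightarrow> real) \<Rightarrow> real \<Rightarrow> real \<Rightarrow> real \<Rightarrow> nat \<Rightarrow> (nat \<Rightarrow> real) \<Rightarrow> real" where
  "eexp Dmax m beta pP pU K y =
     gam Dmax m beta pP pU y * (\<Sum>k\<in>{1..K}. lam Dmax m beta pP pU y ^ (k - 1))"

definition cost_P :: "nat \<Rightarrow> (nat \<Rightarrow> real) \<Rightarrow> real \<Rightarrow> real \<Rightarrow> real \<Rightarrow> nat \<Rightarrow>
    real \<Rightarrow> real \<Rightarrow> real \<Rightarrow> nat \<Rightarrow> (nat \<Rightarrow> real) \<Rightarrow> real" where
  "cost_P Dmax m beta pP pU K tau LP cP d y =
     tau * (1 + real d * eexp Dmax m beta pP pU K y) * LP + cP"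

definition cost_N :: "nat \<Rightarrow> (nat \<Rightarrow> real) \<Rightarrow> real \<Rightarrow> real \<Rightarrow> real \<Rightarrow> nat \<Rightarrow>
    real \<Rightarrow> real \<Rightarrow> nat \<Rightarrow> (nat \<Rightarrow> real) \<Rightarrow> real" where
  "cost_N Dmax m beta pP pU K tau LU d y =
     tau * (1 + real d * eexp Dmax m beta pP pU K y) * LU"

definition social_cost :: "nat \<Rightarrow> (nat \<Rightarrow> real) \<Rightarrow> real \<Rightarrow> real \<Rightarrow> real \<Rightarrow> nat \<Rightarrow>
    real \<Rightarrow> real \<Rightarrow> real \<Rightarrow> real \<Rightarrow> (nat \<Rightarrow> real) \<Rightarrow> real" where
  "social_cost Dmax m beta pP pU K tau LP LU cP y =
     (\<Sum>d\<in>{1..Dmax}. y d * cost_P Dmax m beta pP pU K tau LP cP d y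
                     + (m d - y d) * cost_N Dmax m beta pP pU K tau LU d y)"

end

theory Submission
  imports Defs "HOL-Analysis.Analysis"
begin

text \<open>The profile y enters \<gamma> and \<lambda> only through the moments a(y) = \<Sum> d y_d and
b(y) = \<Sum> d (d - 1) y_d, so the social cost is a constant plus c \<Sum> y_d + G(a(y)) Q(b(y)), where
G = \<tau> \<gamma> (aggregate loss) is a product of two decreasing affine factors, hence nonnegative,
strictly decreasing and strictly convex, while Q = 1 + \<lambda> + \<dots> + \<lambda>^(K-1) is positive,
decreasing and convex on the feasible range. Shifting
protection from a lower to a higher degree keeps \<Sum> y_d, raises a and does not lower b, so it
strictly lowers the cost: in a minimiser every degree above a protected one is fully protected,
and any two minimisers are coordinatewise comparable. For comparable minimisers y \<le> y',
y \<noteq> y', the midpoint costs strictly less than the average of the two costs, by strict convexity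
of G and Chebyshev's inequality for the similarly ordered pairs (G a, G a') and (Q b, Q b').\<close>

lemma mean_mult_le_mean_of_mult:
  fixes u u' v v' :: real
  assumes "0 \<le> (u - u') * (v - v')"
  shows "((u + u') / 2) * ((v + v') / 2) \<le> (u * v + u' * v') / 2"
  using assms by (simp add: algebra_simps)

lemma convex_on_power_nonneg: "convex_on {0::real..} (\<lambda>x. x ^ n)"
  by (cases "even n") (auto intro: convex_on_subset[OF convex_power_even] convex_power_odd)

lemma power_midpoint_le:
  fixes u v :: real
  assumes "0 \<le> u" "0 \<le> v"
  shows "((u + v) / 2) ^ n \<le> (u ^ n + v ^ n) / 2"
  using convex_onD[OF convex_on_power_nonneg, of "1 / 2" u v] assms
  by (simp add: add_divide_distrib)

lemma mult_le_mult_upper: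
  fixes c q x a :: real
  assumes "0 \<le> q" "q \<le> c" "0 \<le> x" "a \<le> x"
  shows "q * a \<le> c * x"
  using mult_mono[OF assms(4,2,3,1)] by (simp add: mult.commute)

lemma affine_product_strict_antimono:
  fixes p q r s a a' :: real
  assumes "0 < q" "0 < s" "a < a'" "q * a' \<le> p" "s * a' \<le> r"
  shows "(p - q * a') * (r - s * a') < (p - q * a) * (r - s * a)"
proof (rule mult_strict_mono)
  show "p - q * a' < p - q * a" "r - s * a' < r - s * a"
    using assms(1-3) by simp_all
  show "0 < p - q * a" "0 \<le> r - s * a'"
    using assms(1,3-5) mult_strict_left_mono[OF assms(3,1)] by linarith+
qed

lemma affine_product_midpoint_gap:
  fixes p q r s a a' :: real
  shows "((p - q * a) * (r - s * a) + (p - q * a') * (r - s * a')) / 2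
           - (p - q * ((a + a') / 2)) * (r - s * ((a + a') / 2)) = q * s * (a - a')\<^sup>2 / 4"
  by (simp add: field_simps power2_eq_square)

definition weighted_sum :: "nat \<Rightarrow> (nat \<Rightarrow> real) \<Rightarrow> (nat \<Rightarrow> real) \<Rightarrow> real" where
  "weighted_sum Dmax c y = (\<Sum>d\<in>{1..Dmax}. c d * y d)"

abbreviation total_mass :: "nat \<Rightarrow> (nat \<Rightarrow> real) \<Rightarrow> real" where
  "total_mass Dmax \<equiv> weighted_sum Dmax (\<lambda>_. 1)"

abbreviation degree_sum :: "nat \<Rightarrow> (nat \<Rightarrow> real) \<Rightarrow> real" where
  "degree_sum Dmax \<equiv> weighted_sum Dmax real"

abbreviation pair_sum :: "nat \<Rightarrow> (nat \<Rightarrow> real) \<Rightarrow> real" where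
  "pair_sum Dmax \<equiv> weighted_sum Dmax (\<lambda>d. real d * (real d - 1))"

lemma weighted_sum_fun_upd:
  assumes "d \<in> {1..Dmax}"
  shows "weighted_sum Dmax c (y(d := v)) = weighted_sum Dmax c y + c d * (v - y d)"
proof -
  have "c i * (y(d := v)) i = c i * y i + (if i = d then c d * (v - y d) else 0)" for i
    by (simp add: algebra_simps)
  then show ?thesis
    using assms by (simp add: weighted_sum_def sum.distrib)
qed

lemma weighted_sum_shift:
  assumes "d \<in> {1..Dmax}" "d' \<in> {1..Dmax}" "d \<noteq> d'"
  shows "weighted_sum Dmax c (y(d := y d - e, d' := y d' + e))
           = weighted_sum Dmax c y + e * (c d' - c d)"
  using assms by (simp add: weighted_sum_fun_upd algebra_simps)

lemma weighted_sum_midpoint: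
  "weighted_sum Dmax c (\<lambda>d. (y d + y' d) / 2) = (weighted_sum Dmax c y + weighted_sum Dmax c y') / 2"
proof -
  have "c d * ((y d + y' d) / 2) = (c d * y d + c d * y' d) / 2" for d
    by (simp add: algebra_simps)
  then show ?thesis
    by (simp add: weighted_sum_def sum_divide_distrib[symmetric] sum.distrib)
qed

lemma weighted_sum_mono:
  assumes "\<forall>d\<in>{1..Dmax}. 0 \<le> c d" "\<forall>d\<in>{1..Dmax}. y d \<le> y' d"
  shows "weighted_sum Dmax c y \<le> weighted_sum Dmax c y'"
  unfolding weighted_sum_def using assms by (intro sum_mono mult_left_mono) auto

lemma weighted_sum_strict_mono:
  assumes "\<forall>d\<in>{1..Dmax}. 0 \<le> c d" "\<forall>d\<in>{1..Dmax}. y d \<le> y' d"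
    and "i \<in> {1..Dmax}" "0 < c i" "y i < y' i"
  shows "weighted_sum Dmax c y < weighted_sum Dmax c y'"
  unfolding weighted_sum_def
proof (rule sum_strict_mono_ex1)
  show "\<forall>d\<in>{1..Dmax}. c d * y d \<le> c d * y' d"
    using assms(1,2) by (auto intro: mult_left_mono)
  show "\<exists>d\<in>{1..Dmax}. c d * y d < c d * y' d"
    using assms(3-5) by (intro bexI[of _ i]) auto
qed simp

lemma continuous_on_weighted_sum: "continuous_on A (weighted_sum Dmax c)"
  unfolding weighted_sum_def
  by (intro continuous_intros continuous_on_subset[OF continuous_on_product_coordinates]) simp

lemma compact_feasible_set: "compact (feasible_set Dmax m)"
proof -
  define B where "B d = (if d \<in> {1..Dmax} then {0..m d} else {0::real})" for d
  have "feasible_set Dmax m = PiE UNIV B"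
    by (auto simp: feasible_set_def B_def PiE_def extensional_def Pi_def)
  moreover have "compactin (product_topology (\<lambda>_. euclidean) UNIV) (PiE UNIV B)"
    unfolding compactin_PiE B_def by auto
  ultimately show ?thesis
    by (simp add: euclidean_product_topology)
qed

locale moment_cost =
  fixes Dmax :: nat and m :: "nat \<Rightarrow> real" and c :: real and G Q :: "real \<Rightarrow> real"
  assumes m_nonneg: "\<forall>d\<in>{1..Dmax}. 0 \<le> m d"
    and G_nonneg: "a \<le> degree_sum Dmax m \<Longrightarrow> 0 \<le> G a"
    and G_strict_antimono: "a < a' \<Longrightarrow> a' \<le> degree_sum Dmax m \<Longrightarrow> G a' < G a"
    and G_midpoint_strict: "a \<noteq> a' \<Longrightarrow> a \<le> degree_sum Dmax m \<Longrightarrow>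
           a' \<le> degree_sum Dmax m \<Longrightarrow> G ((a + a') / 2) < (G a + G a') / 2"
    and Q_pos: "b \<le> pair_sum Dmax m \<Longrightarrow> 0 < Q b"
    and Q_antimono: "b \<le> b' \<Longrightarrow> b' \<le> pair_sum Dmax m \<Longrightarrow> Q b' \<le> Q b"
    and Q_midpoint: "b \<le> pair_sum Dmax m \<Longrightarrow> b' \<le> pair_sum Dmax m \<Longrightarrow>
           Q ((b + b') / 2) \<le> (Q b + Q b') / 2"
    and G_continuous: "continuous_on UNIV G"
    and Q_continuous: "continuous_on UNIV Q"
begin

definition objective :: "(nat \<Rightarrow> real) \<Rightarrow> real" where
  "objective y = c * total_mass Dmax y + G (degree_sum Dmax y) * Q (pair_sum Dmax y)"

definition is_minimizer :: "(nat \<Rightarrow> real) \<Rightarrow> bool" where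
  "is_minimizer y \<longleftrightarrow>
     y \<in> feasible_set Dmax m \<and> (\<forall>z\<in>feasible_set Dmax m. objective y \<le> objective z)"

lemma feasible_bounds:
  assumes "y \<in> feasible_set Dmax m"
  shows "degree_sum Dmax y \<le> degree_sum Dmax m" "pair_sum Dmax y \<le> pair_sum Dmax m"
  using assms by (auto simp: feasible_set_def intro!: weighted_sum_mono)

lemma minimizer_saturates_higher_degree:
  assumes min: "is_minimizer y" and d: "d \<in> {1..Dmax}" and d': "d' \<in> {1..Dmax}"
    and "d < d'" and "0 < y d"
  shows "y d' = m d'"
proof (rule ccontr)
  assume "y d' \<noteq> m d'"
  have y: "y \<in> feasible_set Dmax m"
    using min by (simp add: is_minimizer_def)
  with d' have "y d' \<le> m d'"
    by (simp add: feasible_set_def)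
  with \<open>y d' \<noteq> m d'\<close> have "y d' < m d'"
    by simp
  define e where "e = min (y d) (m d' - y d')"
  have e: "0 < e" "e \<le> y d" "e \<le> m d' - y d'"
    using \<open>y d' < m d'\<close> \<open>0 < y d\<close> by (auto simp: e_def)
  define z where "z = y(d := y d - e, d' := y d' + e)"
  have "d \<noteq> d'"
    using \<open>d < d'\<close> by simp
  have z: "z \<in> feasible_set Dmax m"
    using y d d' e \<open>d \<noteq> d'\<close> by (auto simp: feasible_set_def z_def dest!: bspec[of _ _ d])
  have shift: "weighted_sum Dmax w z = weighted_sum Dmax w y + e * (w d' - w d)" for w
    unfolding z_def using weighted_sum_shift[OF d d' \<open>d \<noteq> d'\<close>] .
  have "degree_sum Dmax y < degree_sum Dmax z"
    using shift[of real] e \<open>d < d'\<close> by simp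
  moreover have "pair_sum Dmax y \<le> pair_sum Dmax z"
    using shift[of "\<lambda>d. real d * (real d - 1)"] e \<open>d < d'\<close> d by (simp add: mult_mono)
  ultimately have "G (degree_sum Dmax z) * Q (pair_sum Dmax z) < G (degree_sum Dmax y) * Q (pair_sum Dmax y)"
    using feasible_bounds[OF z] feasible_bounds[OF y]
    by (intro mult_less_le_imp_less G_strict_antimono Q_antimono G_nonneg Q_pos)
  then have "objective z < objective y"
    using shift[of "\<lambda>_. 1"] by (simp add: objective_def)
  with min z show False
    by (auto simp: is_minimizer_def)
qed

lemma minimizers_comparable:
  assumes "is_minimizer y" "is_minimizer y'"
  shows "(\<forall>d\<in>{1..Dmax}. y d \<le> y' d) \<or> (\<forall>d\<in>{1..Dmax}. y' d \<le> y d)"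
proof (rule ccontr)
  assume "\<not> ?thesis"
  then obtain i j where ij: "i \<in> {1..Dmax}" "j \<in> {1..Dmax}" "y' i < y i" "y j < y' j"
    by (auto simp: not_le)
  have bounds: "0 \<le> y' i" "0 \<le> y j" "y i \<le> m i" "y' j \<le> m j"
    using assms ij(1,2) by (auto simp: is_minimizer_def feasible_set_def)
  have "i \<noteq> j"
    using ij by auto
  then consider "i < j" | "j < i"
    by (meson linorder_neqE_nat)
  then show False
  proof cases
    case 1
    then have "y j = m j"
      using minimizer_saturates_higher_degree[OF assms(1) ij(1,2)] ij bounds by simp
    with ij bounds show False by simp
  next
    case 2
    then have "y' i = m i"
      using minimizer_saturates_higher_degree[OF assms(2) ij(2,1)] ij bounds by simp
    with ij bounds show False by simp
  qed
qed

lemma objective_midpoint_strict: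
  assumes y: "y \<in> feasible_set Dmax m" and y': "y' \<in> feasible_set Dmax m"
    and le: "\<forall>d\<in>{1..Dmax}. y d \<le> y' d" and i: "i \<in> {1..Dmax}" "y i < y' i"
  shows "objective (\<lambda>d. (y d + y' d) / 2) < (objective y + objective y') / 2"
proof -
  define z where "z d = (y d + y' d) / 2" for d
  have z: "z \<in> feasible_set Dmax m"
    using y y' by (fastforce simp: feasible_set_def z_def)
  have z_sums: "weighted_sum Dmax w z = (weighted_sum Dmax w y + weighted_sum Dmax w y') / 2" for w
    unfolding z_def by (rule weighted_sum_midpoint)
  define a where "a = degree_sum Dmax y"
  define a' where "a' = degree_sum Dmax y'"
  define b where "b = pair_sum Dmax y"
  define b' where "b' = pair_sum Dmax y'"
  note sums = a_def a'_def b_def b'_def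
  have bounds: "a \<le> degree_sum Dmax m" "a' \<le> degree_sum Dmax m"
    "b \<le> pair_sum Dmax m" "b' \<le> pair_sum Dmax m"
    unfolding sums using feasible_bounds[OF y] feasible_bounds[OF y'] by auto
  have "a < a'"
    unfolding sums using le i by (intro weighted_sum_strict_mono) auto
  have "b \<le> b'"
    unfolding sums using le by (intro weighted_sum_mono) auto
  have G_z: "G (degree_sum Dmax z) < (G a + G a') / 2"
    unfolding z_sums sums[symmetric] using \<open>a < a'\<close> bounds by (intro G_midpoint_strict) auto
  have Q_z: "Q (pair_sum Dmax z) \<le> (Q b + Q b') / 2"
    unfolding z_sums sums[symmetric] using bounds by (intro Q_midpoint)
  have "G (degree_sum Dmax z) * Q (pair_sum Dmax z) \<le> G (degree_sum Dmax z) * ((Q b + Q b') / 2)"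
    using Q_z G_nonneg[OF feasible_bounds(1)[OF z]] by (rule mult_left_mono)
  also have "\<dots> < ((G a + G a') / 2) * ((Q b + Q b') / 2)"
    using G_z Q_pos[OF bounds(3)] Q_pos[OF bounds(4)] by (intro mult_strict_right_mono) auto
  also have "\<dots> \<le> (G a * Q b + G a' * Q b') / 2"
    using G_strict_antimono[OF \<open>a < a'\<close> bounds(2)] Q_antimono[OF \<open>b \<le> b'\<close> bounds(4)]
    by (intro mean_mult_le_mean_of_mult) simp
  finally have "objective z < (objective y + objective y') / 2"
    using z_sums[of "\<lambda>_. 1"] by (simp add: objective_def sums algebra_simps add_divide_distrib)
  then show ?thesis
    unfolding z_def .
qed

lemma minimizer_eq_of_le:
  assumes min: "is_minimizer y" "is_minimizer y'" and le: "\<forall>d\<in>{1..Dmax}. y d \<le> y' d"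
  shows "y = y'"
proof (rule ccontr)
  assume "y \<noteq> y'"
  have y: "y \<in> feasible_set Dmax m" and y': "y' \<in> feasible_set Dmax m"
    using min by (auto simp: is_minimizer_def)
  then obtain i where "i \<in> {1..Dmax}" "y i < y' i"
    using \<open>y \<noteq> y'\<close> le by (force simp: feasible_set_def order_le_less)
  then have "objective (\<lambda>d. (y d + y' d) / 2) < (objective y + objective y') / 2"
    using objective_midpoint_strict[OF y y' le] by blast
  moreover have "(\<lambda>d. (y d + y' d) / 2) \<in> feasible_set Dmax m"
    using y y' by (fastforce simp: feasible_set_def)
  ultimately show False
    using min by (fastforce simp: is_minimizer_def)
qed

lemma continuous_on_objective: "continuous_on A objective"
  unfolding objective_def
  by (intro continuous_intros continuous_on_weighted_sum
        continuous_on_compose2[OF G_continuous] continuous_on_compose2[OF Q_continuous]) auto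

lemma minimizer_exists: "\<exists>y. is_minimizer y"
proof -
  have "(\<lambda>_. 0) \<in> feasible_set Dmax m"
    using m_nonneg by (simp add: feasible_set_def)
  then have "feasible_set Dmax m \<noteq> {}"
    by blast
  from continuous_attains_inf[OF compact_feasible_set this continuous_on_objective]
  show ?thesis
    by (auto simp: is_minimizer_def)
qed

lemma ex1_minimizer:
  "\<exists>!y. y \<in> feasible_set Dmax m \<and> (\<forall>z\<in>feasible_set Dmax m. objective y \<le> objective z)"
proof -
  obtain y where "is_minimizer y"
    using minimizer_exists by blast
  moreover have "y' = y" if "is_minimizer y'" for y'
    using minimizers_comparable[OF that \<open>is_minimizer y\<close>]
      minimizer_eq_of_le[OF that \<open>is_minimizer y\<close>] minimizer_eq_of_le[OF \<open>is_minimizer y\<close> that]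
    by auto
  ultimately show ?thesis
    unfolding is_minimizer_def[symmetric] by blast
qed

end

locale protection_setting =
  fixes Dmax K :: nat and m :: "nat \<Rightarrow> real" and tau LP LU pP pU beta cP :: real
  assumes Dmax_pos: "1 \<le> Dmax" and m_pos: "\<forall>d\<in>{1..Dmax}. 0 < m d"
    and tau_pos: "0 < tau" and LP_nonneg: "0 \<le> LP" and LP_less_LU: "LP < LU"
    and pP_nonneg: "0 \<le> pP" and pP_less_pU: "pP < pU" and beta_pos: "0 < beta" and K_pos: "1 \<le> K"
begin

definition gamma_lin :: "real \<Rightarrow> real" where
  "gamma_lin a = beta * (pU * degree_sum Dmax m - (pU - pP) * a) / degree_sum Dmax m"

definition lambda_lin :: "real \<Rightarrow> real" where
  "lambda_lin b = beta * (pU * pair_sum Dmax m - (pU - pP) * b) / degree_sum Dmax m"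

definition gamma_loss :: "real \<Rightarrow> real" where
  "gamma_loss a = tau * gamma_lin a * (LU * degree_sum Dmax m - (LU - LP) * a)"

definition cascade_factor :: "real \<Rightarrow> real" where
  "cascade_factor b = (\<Sum>k\<in>{1..K}. lambda_lin b ^ (k - 1))"

lemma degree_sum_pos: "0 < degree_sum Dmax m"
  unfolding weighted_sum_def using m_pos Dmax_pos by (intro sum_pos) auto

lemma pair_sum_nonneg: "0 \<le> pair_sum Dmax m"
  unfolding weighted_sum_def using m_pos by (intro sum_nonneg mult_nonneg_nonneg) (auto simp: less_imp_le)

lemma wdeg_mixture_sum:
  "(\<Sum>d\<in>{1..Dmax}. wdeg Dmax m d * w d * ((y d / m d) * pP + (1 - y d / m d) * pU))
     = (pU * weighted_sum Dmax (\<lambda>d. real d * w d) m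
         - (pU - pP) * weighted_sum Dmax (\<lambda>d. real d * w d) y) / degree_sum Dmax m"
proof -
  have "wdeg Dmax m d * w d * ((y d / m d) * pP + (1 - y d / m d) * pU)
      = (pU * (real d * w d * m d) - (pU - pP) * (real d * w d * y d)) / degree_sum Dmax m"
    if "d \<in> {1..Dmax}" for d
  proof -
    have "0 < m d"
      using m_pos that by blast
    then show ?thesis
      using degree_sum_pos by (simp add: wdeg_def weighted_sum_def field_simps)
  qed
  then show ?thesis
    by (simp add: weighted_sum_def sum_divide_distrib[symmetric] sum_subtractf sum_distrib_left)
qed

lemma gam_eq: "gam Dmax m beta pP pU y = gamma_lin (degree_sum Dmax y)"
  using wdeg_mixture_sum[of "\<lambda>_. 1" y] by (simp add: gam_def gamma_lin_def)

lemma lam_eq: "lam Dmax m beta pP pU y = lambda_lin (pair_sum Dmax y)"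
  using wdeg_mixture_sum[of "\<lambda>d. real d - 1" y] by (simp add: lam_def lambda_lin_def mult.assoc)

lemma gamma_loss_eq:
  "gamma_loss a = tau * beta / degree_sum Dmax m
     * ((pU * degree_sum Dmax m - (pU - pP) * a) * (LU * degree_sum Dmax m - (LU - LP) * a))"
  by (simp add: gamma_loss_def gamma_lin_def)

lemma gamma_loss_nonneg:
  assumes "a \<le> degree_sum Dmax m"
  shows "0 \<le> gamma_loss a"
proof -
  have "(pU - pP) * a \<le> pU * degree_sum Dmax m" "(LU - LP) * a \<le> LU * degree_sum Dmax m"
    using assms degree_sum_pos pP_nonneg pP_less_pU LP_nonneg LP_less_LU
    by (auto intro!: mult_le_mult_upper)
  then show ?thesis
    unfolding gamma_loss_eq using tau_pos beta_pos degree_sum_pos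
    by (intro mult_nonneg_nonneg) auto
qed

lemma gamma_loss_strict_antimono:
  assumes "a < a'" "a' \<le> degree_sum Dmax m"
  shows "gamma_loss a' < gamma_loss a"
proof -
  have "(pU - pP) * a' \<le> pU * degree_sum Dmax m" "(LU - LP) * a' \<le> LU * degree_sum Dmax m"
    using assms degree_sum_pos pP_nonneg pP_less_pU LP_nonneg LP_less_LU
    by (auto intro!: mult_le_mult_upper)
  then have "(pU * degree_sum Dmax m - (pU - pP) * a') * (LU * degree_sum Dmax m - (LU - LP) * a')
      < (pU * degree_sum Dmax m - (pU - pP) * a) * (LU * degree_sum Dmax m - (LU - LP) * a)"
    using assms(1) pP_less_pU LP_less_LU by (intro affine_product_strict_antimono) auto
  then show ?thesis
    unfolding gamma_loss_eq using tau_pos beta_pos degree_sum_pos by (intro mult_strict_left_mono) auto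
qed

lemma gamma_loss_midpoint_strict:
  assumes "a \<noteq> a'"
  shows "gamma_loss ((a + a') / 2) < (gamma_loss a + gamma_loss a') / 2"
proof -
  define P where "P x = (pU * degree_sum Dmax m - (pU - pP) * x) * (LU * degree_sum Dmax m - (LU - LP) * x)"
    for x
  define k where "k = tau * beta / degree_sum Dmax m"
  have "gamma_loss x = k * P x" for x
    by (simp add: gamma_loss_eq P_def k_def)
  then have "(gamma_loss a + gamma_loss a') / 2 - gamma_loss ((a + a') / 2)
      = k * ((P a + P a') / 2 - P ((a + a') / 2))"
    by (simp add: algebra_simps)
  also have "\<dots> = k * ((pU - pP) * (LU - LP) * (a - a')\<^sup>2 / 4)"
    unfolding P_def affine_product_midpoint_gap ..
  also have "\<dots> > 0"
    using assms tau_pos beta_pos degree_sum_pos pP_less_pU LP_less_LU by (simp add: k_def)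
  finally show ?thesis
    by simp
qed

lemma lambda_lin_nonneg:
  assumes "b \<le> pair_sum Dmax m"
  shows "0 \<le> lambda_lin b"
proof -
  have "(pU - pP) * b \<le> pU * pair_sum Dmax m"
    using assms pair_sum_nonneg pP_nonneg pP_less_pU by (auto intro!: mult_le_mult_upper)
  then show ?thesis
    unfolding lambda_lin_def using beta_pos degree_sum_pos by (intro divide_nonneg_pos) auto
qed

lemma lambda_lin_antimono: "b \<le> b' \<Longrightarrow> lambda_lin b' \<le> lambda_lin b"
  unfolding lambda_lin_def using beta_pos degree_sum_pos pP_less_pU
  by (intro divide_right_mono mult_left_mono) auto

lemma lambda_lin_midpoint: "lambda_lin ((b + b') / 2) = (lambda_lin b + lambda_lin b') / 2"
  unfolding lambda_lin_def using degree_sum_pos by (simp add: field_simps)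

lemma cascade_factor_ge_one:
  assumes "b \<le> pair_sum Dmax m"
  shows "1 \<le> cascade_factor b"
proof -
  have "cascade_factor b = lambda_lin b ^ 0 + (\<Sum>k\<in>{1..K} - {1}. lambda_lin b ^ (k - 1))"
    unfolding cascade_factor_def using K_pos by (subst sum.remove[of _ 1]) auto
  moreover have "0 \<le> (\<Sum>k\<in>{1..K} - {1}. lambda_lin b ^ (k - 1))"
    using lambda_lin_nonneg[OF assms] by (intro sum_nonneg) auto
  ultimately show ?thesis
    by simp
qed

lemma cascade_factor_antimono:
  "b \<le> b' \<Longrightarrow> b' \<le> pair_sum Dmax m \<Longrightarrow> cascade_factor b' \<le> cascade_factor b"
  unfolding cascade_factor_def using lambda_lin_nonneg lambda_lin_antimono
  by (intro sum_mono power_mono) auto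

lemma cascade_factor_midpoint:
  assumes "b \<le> pair_sum Dmax m" "b' \<le> pair_sum Dmax m"
  shows "cascade_factor ((b + b') / 2) \<le> (cascade_factor b + cascade_factor b') / 2"
proof -
  have "cascade_factor ((b + b') / 2)
      \<le> (\<Sum>k\<in>{1..K}. (lambda_lin b ^ (k - 1) + lambda_lin b' ^ (k - 1)) / 2)"
    unfolding cascade_factor_def lambda_lin_midpoint
    using lambda_lin_nonneg[OF assms(1)] lambda_lin_nonneg[OF assms(2)]
    by (intro sum_mono power_midpoint_le)
  also have "\<dots> = (cascade_factor b + cascade_factor b') / 2"
    by (simp add: cascade_factor_def sum_divide_distrib[symmetric] sum.distrib)
  finally show ?thesis .
qed

lemma continuous_on_gamma_loss: "continuous_on UNIV gamma_loss"
  unfolding gamma_loss_def gamma_lin_def using degree_sum_pos by (intro continuous_intros) auto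

lemma continuous_on_cascade_factor: "continuous_on UNIV cascade_factor"
  unfolding cascade_factor_def lambda_lin_def using degree_sum_pos by (intro continuous_intros) auto

end

sublocale protection_setting \<subseteq> moment_cost Dmax m "cP - tau * (LU - LP)" gamma_loss cascade_factor
proof
  show "\<forall>d\<in>{1..Dmax}. 0 \<le> m d"
    using m_pos by (simp add: less_imp_le)
  show "0 < cascade_factor b" if "b \<le> pair_sum Dmax m" for b
    using cascade_factor_ge_one[OF that] by simp
qed (use gamma_loss_nonneg gamma_loss_strict_antimono gamma_loss_midpoint_strict cascade_factor_antimono
       cascade_factor_midpoint continuous_on_gamma_loss continuous_on_cascade_factor in blast)+

lemma (in protection_setting) social_cost_eq_objective:
  "social_cost Dmax m beta pP pU K tau LP LU cP y = tau * LU * total_mass Dmax m + objective y"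
proof -
  define e where "e = eexp Dmax m beta pP pU K y"
  have e_eq: "e = gamma_lin (degree_sum Dmax y) * cascade_factor (pair_sum Dmax y)"
    by (simp add: e_def eexp_def gam_eq lam_eq cascade_factor_def)
  have "y d * cost_P Dmax m beta pP pU K tau LP cP d y
        + (m d - y d) * cost_N Dmax m beta pP pU K tau LU d y
      = tau * LU * m d + (cP - tau * (LU - LP)) * y d
        + tau * e * (LU * (real d * m d) - (LU - LP) * (real d * y d))"
    for d
    by (simp add: cost_P_def cost_N_def e_def[symmetric] algebra_simps)
  then have "social_cost Dmax m beta pP pU K tau LP LU cP y
      = tau * LU * total_mass Dmax m + (cP - tau * (LU - LP)) * total_mass Dmax y
        + tau * e * (LU * degree_sum Dmax m - (LU - LP) * degree_sum Dmax y)"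
    by (simp add: social_cost_def weighted_sum_def sum.distrib sum_subtractf sum_distrib_left[symmetric])
  then show ?thesis
    unfolding objective_def by (simp add: gamma_loss_def e_eq algebra_simps)
qed

theorem theorem5:
  fixes Dmax K :: nat and m :: "nat \<Rightarrow> real"
    and tau LP LU pP pU beta cP cI xi ded :: real
  assumes "Dmax \<ge> 1"
    and "\<forall>d\<in>{1..Dmax}. m d > 0" and "(\<Sum>d\<in>{1..Dmax}. m d) = 1"
    and "0 < tau" "tau \<le> 1"
    and "0 \<le> LP" "LP < LU"
    and "0 \<le> pP" "pP < pU" "pU \<le> 1"
    and "0 < beta" "beta \<le> 1"
    and "K \<ge> 1"
    and "cP \<ge> 0" "cI \<ge> 0"
    and "0 < xi" "xi \<le> 1" "ded \<ge> 0"
    and "LP < (1 - xi) * LU" "cP > cI + ded"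
  shows "\<exists>!ys. ys \<in> feasible_set Dmax m \<and>
           (\<forall>y\<in>feasible_set Dmax m.
              social_cost Dmax m beta pP pU K tau LP LU cP ys
                \<le> social_cost Dmax m beta pP pU K tau LP LU cP y)"
proof -
  interpret protection_setting Dmax K m tau LP LU pP pU beta cP
    using assms by unfold_locales auto
  show ?thesis
    using ex1_minimizer by (simp add: social_cost_eq_objective)
qed

end
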